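(* Let $\beta\in(0,1)$, $T\ge1$, and $\mathbf{x}_0,\mathbf{x}_1,\dots,\mathbf{x}_T\in\mathbb{R}^d$. For $n\in[T]$ let $q_{n,s}:=\beta^{n-s}\frac{1-\beta}{1-\beta^n}$ ($s=1,\dots,n$), let $\mathbf{X}_n$ be the random vector equal to $\mathbf{x}_s$ with probability $q_{n,s}$, and $\overline{\mathbf{x}}_n:=\mathbb{E}[\mathbf{X}_n]$. Let $\tau\in[T]$ be random with $\Pr(\tau=t)=\frac{1-\beta^t}{T}$ for $t\le T-1$ and $\Pr(\tau=T)=\frac{1-\beta^T}{(1-\beta)T}$. Then $$\mathbb{E}_\tau\mathbb{E}_{\mathbf{X}_\tau}\|\mathbf{X}_\tau-\overline{\mathbf{x}}_\tau\|^2\le\frac{2\beta}{(1-\beta)^2T}\sum_{n=1}^T\|\mathbf{x}_n-\mathbf{x}_{n-1}\|^2.$$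
   Context: Norms are Euclidean. *)

theory Defs
  imports "HOL-Analysis.Analysis"
begin

definition qw :: "real \<Rightarrow> nat \<Rightarrow> nat \<Rightarrow> real" where
  "qw \<beta> n s = \<beta> ^ (n - s) * (1 - \<beta>) / (1 - \<beta> ^ n)"

definition xbar :: "real \<Rightarrow> (nat \<Rightarrow> 'a::real_vector) \<Rightarrow> nat \<Rightarrow> 'a" where
  "xbar \<beta> x n = (\<Sum>s=1..n. qw \<beta> n s *\<^sub>R x s)"

definition ptau :: "real \<Rightarrow> nat \<Rightarrow> nat \<Rightarrow> real" where
  "ptau \<beta> T t = (if t = T then (1 - \<beta> ^ T) / ((1 - \<beta>) * real T)
                  else (1 - \<beta> ^ t) / real T)"

end

theory Submission
  imports Defs
begin

text \<open>
  Moving the centre of the distribution of X_t from its mean to x_t can only increase the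
  second moment, and Cauchy-Schwarz along the path x_s, ..., x_t bounds the squared distance
  from x_s to x_t by (t - s) times the sum of the squared increments in between. Up to the
  factor 1/T, the weight of x_s under tau and X_tau is beta^(t-s), times 1 - beta unless t = T.
  Collecting the coefficient of each squared increment is then a statement about linear
  recurrences in T: a potential that also carries a geometric tail grows, at each step, by the
  new increment times (1-beta)^2 sum_j j beta^j + beta (1-beta) sum_j beta^j, which is at most
  beta + beta^2 \<le> 2 beta.
\<close>

lemma sum_weighted_sq_dist_mean_le:
  fixes x :: "'b \<Rightarrow> 'a::real_inner"
  assumes "(\<Sum>s\<in>S. q s) = 1" "\<And>s. s \<in> S \<Longrightarrow> 0 \<le> q s"
  shows "(\<Sum>s\<in>S. q s * (norm (x s - (\<Sum>r\<in>S. q r *\<^sub>R x r)))\<^sup>2) \<le> (\<Sum>s\<in>S. q s * (norm (x s - c))\<^sup>2)"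
proof -
  define m where "m = (\<Sum>r\<in>S. q r *\<^sub>R x r)"
  have split: "(norm (x s - c))\<^sup>2 = (norm (x s - m))\<^sup>2 + 2 * inner (x s - m) (m - c) + (norm (m - c))\<^sup>2" for s
    using dot_norm[of "x s - m" "m - c"] by simp
  have "(\<Sum>s\<in>S. q s * inner (x s - m) (m - c)) = inner (\<Sum>s\<in>S. q s *\<^sub>R x s - q s *\<^sub>R m) (m - c)"
    by (simp add: inner_sum_left inner_diff_left right_diff_distrib)
  also have "\<dots> = 0"
    using assms(1) by (simp add: sum_subtractf m_def flip: scaleR_left.sum)
  finally have cross: "(\<Sum>s\<in>S. q s * inner (x s - m) (m - c)) = 0" .
  have "(\<Sum>s\<in>S. q s * (norm (x s - c))\<^sup>2)
      = (\<Sum>s\<in>S. q s * (norm (x s - m))\<^sup>2) + 2 * (\<Sum>s\<in>S. q s * inner (x s - m) (m - c))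
        + (\<Sum>s\<in>S. q s) * (norm (m - c))\<^sup>2"
    by (simp add: split distrib_left mult.left_commute sum.distrib sum_distrib_left sum_distrib_right)
  then show ?thesis
    using cross assms(1) by (simp add: m_def)
qed

lemma sq_norm_diff_le_sum_sq_increments:
  fixes x :: "nat \<Rightarrow> 'a::real_normed_vector"
  assumes "s \<le> t"
  shows "(norm (x s - x t))\<^sup>2 \<le> real (t - s) * (\<Sum>k=Suc s..t. (norm (x k - x (k - 1)))\<^sup>2)"
proof -
  have "(\<Sum>k=Suc s..t. x k - x (k - 1)) = (\<Sum>i=s..<t. x (Suc i) - x i)"
    unfolding atLeastLessThanSuc_atLeastAtMost[symmetric] sum.shift_bounds_Suc_ivl by simp
  then have "x t - x s = (\<Sum>k=Suc s..t. x k - x (k - 1))"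
    using sum_Suc_diff'[OF assms, of x] by simp
  then have "norm (x s - x t) \<le> (\<Sum>k=Suc s..t. norm (x k - x (k - 1)))"
    by (metis norm_minus_commute norm_sum)
  then have "(norm (x s - x t))\<^sup>2 \<le> (\<Sum>k=Suc s..t. norm (x k - x (k - 1)))\<^sup>2"
    by (simp add: power_mono)
  also have "\<dots> \<le> (\<Sum>k=Suc s..t. (norm (x k - x (k - 1)))\<^sup>2) * real (t - s)"
    using sum_squared_le_sum_of_squares[of "\<lambda>k. norm (x k - x (k - 1))" "{Suc s..t}"] by simp
  finally show ?thesis
    by (simp add: mult.commute)
qed

lemma one_minus_mult_sum_power_le:
  fixes \<beta> :: real
  assumes "0 \<le> \<beta>"
  shows "(1 - \<beta>) * (\<Sum>j=1..n. \<beta> ^ j) \<le> \<beta>"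
proof (cases "n = 0")
  case False
  then show ?thesis
    using sum_gp_multiplied[of 1 n \<beta>] assms by simp
qed (simp add: assms)

lemma one_minus_mult_sum_of_nat_mult_power:
  fixes \<beta> :: real
  shows "(1 - \<beta>) * (\<Sum>j=1..n. real j * \<beta> ^ j) = (\<Sum>j=1..n. \<beta> ^ j) - real n * \<beta> ^ Suc n"
proof (induction n)
  case (Suc n)
  have "(1 - \<beta>) * (\<Sum>j=1..Suc n. real j * \<beta> ^ j)
      = (1 - \<beta>) * (\<Sum>j=1..n. real j * \<beta> ^ j) + (1 - \<beta>) * (real (Suc n) * \<beta> ^ Suc n)"
    by (simp add: distrib_left)
  also have "\<dots> = (\<Sum>j=1..Suc n. \<beta> ^ j) - real (Suc n) * \<beta> ^ Suc (Suc n)"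
    by (simp only: Suc.IH) (simp add: algebra_simps)
  finally show ?case .
qed simp

lemma sq_one_minus_mult_sum_of_nat_mult_power_le:
  fixes \<beta> :: real
  assumes "0 \<le> \<beta>" "\<beta> \<le> 1"
  shows "(1 - \<beta>)\<^sup>2 * (\<Sum>j=1..n. real j * \<beta> ^ j) \<le> \<beta>"
proof -
  have "(1 - \<beta>)\<^sup>2 * (\<Sum>j=1..n. real j * \<beta> ^ j) = (1 - \<beta>) * ((\<Sum>j=1..n. \<beta> ^ j) - real n * \<beta> ^ Suc n)"
    by (simp only: power2_eq_square mult.assoc one_minus_mult_sum_of_nat_mult_power)
  also have "\<dots> \<le> (1 - \<beta>) * (\<Sum>j=1..n. \<beta> ^ j)"
    using assms by (intro mult_left_mono) auto
  also have "\<dots> \<le> \<beta>"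
    using assms(1) by (rule one_minus_mult_sum_power_le)
  finally show ?thesis .
qed

definition lag_cost :: "real \<Rightarrow> (nat \<Rightarrow> real) \<Rightarrow> nat \<Rightarrow> real" where
  "lag_cost \<beta> d t = (\<Sum>s=1..t. \<beta> ^ (t - s) * real (t - s) * (\<Sum>k=Suc s..t. d k))"

definition lag_tail :: "real \<Rightarrow> (nat \<Rightarrow> real) \<Rightarrow> nat \<Rightarrow> real" where
  "lag_tail \<beta> d t = (\<Sum>s=1..t. \<beta> ^ (Suc t - s) * (\<Sum>k=Suc s..t. d k))"

lemma sum_reflect_Suc_diff:
  "(\<Sum>s=1..t. g (Suc t - s)) = (\<Sum>j=1..t. g j :: 'a::comm_monoid_add)"
  using sum.atLeastAtMost_rev[of g 1 t] by (simp add: add.commute)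

lemma lag_cost_Suc:
  "lag_cost \<beta> d (Suc t)
     = \<beta> * lag_cost \<beta> d t + lag_tail \<beta> d t + d (Suc t) * (\<Sum>j=1..t. real j * \<beta> ^ j)"
proof -
  have "lag_cost \<beta> d (Suc t)
      = (\<Sum>s=1..t. \<beta> * (\<beta> ^ (t - s) * real (t - s) * (\<Sum>k=Suc s..t. d k))
           + \<beta> ^ (Suc t - s) * (\<Sum>k=Suc s..t. d k)
           + d (Suc t) * (real (Suc t - s) * \<beta> ^ (Suc t - s)))"
    unfolding lag_cost_def
    by (auto simp: Suc_diff_le algebra_simps intro!: sum.cong)
  also have "\<dots> = \<beta> * lag_cost \<beta> d t + lag_tail \<beta> d t + d (Suc t) * (\<Sum>j=1..t. real j * \<beta> ^ j)"
    unfolding lag_cost_def lag_tail_def sum.distrib sum_distrib_left[symmetric]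
      sum_reflect_Suc_diff[of "\<lambda>j. real j * \<beta> ^ j"] ..
  finally show ?thesis .
qed

lemma lag_tail_Suc:
  "lag_tail \<beta> d (Suc t) = \<beta> * lag_tail \<beta> d t + \<beta> * d (Suc t) * (\<Sum>j=1..t. \<beta> ^ j)"
proof -
  have "lag_tail \<beta> d (Suc t)
      = (\<Sum>s=1..t. \<beta> * (\<beta> ^ (Suc t - s) * (\<Sum>k=Suc s..t. d k)) + \<beta> * d (Suc t) * \<beta> ^ (Suc t - s))"
    unfolding lag_tail_def
    by (auto simp: Suc_diff_le algebra_simps intro!: sum.cong)
  also have "\<dots> = \<beta> * lag_tail \<beta> d t + \<beta> * d (Suc t) * (\<Sum>j=1..t. \<beta> ^ j)"
    unfolding lag_tail_def sum.distrib sum_distrib_left[symmetric] sum_reflect_Suc_diff[of "power \<beta>"] ..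
  finally show ?thesis .
qed

text \<open>
  The tail term cancels the contribution of lag_tail in lag_cost_Suc, so each step adds only
  a multiple of the newest increment d (Suc T).
\<close>
lemma lag_cost_potential_le:
  fixes \<beta> :: real
  assumes "0 \<le> \<beta>" "\<beta> \<le> 1" "\<And>k. 0 \<le> d k"
  shows "(1 - \<beta>)\<^sup>2 * ((1 - \<beta>) * (\<Sum>t=1..<T. lag_cost \<beta> d t) + lag_cost \<beta> d T)
           + (1 - \<beta>) * lag_tail \<beta> d T
         \<le> (\<beta> + \<beta>\<^sup>2) * (\<Sum>k=1..T. d k)"
proof (induction T)
  case 0
  show ?case by (simp add: lag_cost_def lag_tail_def)
next
  case (Suc T)
  define J where "J = (\<Sum>j=1..T. real j * \<beta> ^ j)"
  define I where "I = (\<Sum>j=1..T. \<beta> ^ j)"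
  have sum_Suc: "(\<Sum>t=1..<Suc T. lag_cost \<beta> d t) = (\<Sum>t=1..<T. lag_cost \<beta> d t) + lag_cost \<beta> d T"
    by (cases T) (simp_all add: lag_cost_def)
  have "(1 - \<beta>)\<^sup>2 * ((1 - \<beta>) * (\<Sum>t=1..<Suc T. lag_cost \<beta> d t) + lag_cost \<beta> d (Suc T))
          + (1 - \<beta>) * lag_tail \<beta> d (Suc T)
      = (1 - \<beta>)\<^sup>2 * ((1 - \<beta>) * (\<Sum>t=1..<T. lag_cost \<beta> d t) + lag_cost \<beta> d T)
          + (1 - \<beta>) * lag_tail \<beta> d T + d (Suc T) * ((1 - \<beta>)\<^sup>2 * J + \<beta> * ((1 - \<beta>) * I))"
    unfolding sum_Suc lag_cost_Suc lag_tail_Suc J_def I_def by (simp add: algebra_simps power2_eq_square)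
  also have "\<dots> \<le> (\<beta> + \<beta>\<^sup>2) * (\<Sum>k=1..T. d k) + d (Suc T) * (\<beta> + \<beta> * \<beta>)"
    using Suc.IH sq_one_minus_mult_sum_of_nat_mult_power_le[OF assms(1,2), of T]
      one_minus_mult_sum_power_le[OF assms(1), of T] assms
    unfolding J_def I_def by (intro add_mono mult_left_mono) auto
  also have "\<dots> = (\<beta> + \<beta>\<^sup>2) * (\<Sum>k=1..Suc T. d k)"
    by (simp add: algebra_simps power2_eq_square)
  finally show ?case .
qed

lemma lag_tail_nonneg: "(\<And>k. 0 \<le> d k) \<Longrightarrow> 0 \<le> \<beta> \<Longrightarrow> 0 \<le> lag_tail \<beta> d t"
  unfolding lag_tail_def by (intro sum_nonneg mult_nonneg_nonneg zero_le_power) auto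

lemma sum_qw_eq_1:
  assumes "0 \<le> \<beta>" "\<beta> < 1" "1 \<le> t"
  shows "(\<Sum>s=1..t. qw \<beta> t s) = 1"
proof -
  have "(\<Sum>s=1..t. \<beta> ^ (t - s)) = (\<Sum>j<t. \<beta> ^ j)"
    by (rule sum.reindex_bij_witness[where i="\<lambda>j. t - j" and j="\<lambda>s. t - s"]) auto
  then have "(1 - \<beta>) * (\<Sum>s=1..t. \<beta> ^ (t - s)) = 1 - \<beta> ^ t"
    by (simp add: one_diff_power_eq)
  moreover have "\<beta> ^ t < 1"
    using assms by (simp add: power_less_one_iff)
  moreover have "(\<Sum>s=1..t. qw \<beta> t s) = (1 - \<beta>) * (\<Sum>s=1..t. \<beta> ^ (t - s)) / (1 - \<beta> ^ t)"
    unfolding qw_def by (simp add: sum_divide_distrib sum_distrib_left mult.commute)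
  ultimately show ?thesis
    by simp
qed

lemma qw_nonneg:
  assumes "0 \<le> \<beta>" "\<beta> < 1"
  shows "0 \<le> qw \<beta> t s"
  using assms power_le_one[of \<beta> t] unfolding qw_def by simp

lemma ptau_nonneg:
  assumes "0 \<le> \<beta>" "\<beta> < 1"
  shows "0 \<le> ptau \<beta> T t"
  using assms power_le_one[of \<beta> t] power_le_one[of \<beta> T] unfolding ptau_def by simp

lemma ptau_mult_qw:
  assumes "0 \<le> \<beta>" "\<beta> < 1" "1 \<le> t"
  shows "ptau \<beta> T t * qw \<beta> t s = (if t = T then 1 else 1 - \<beta>) / real T * \<beta> ^ (t - s)"
proof -
  have "\<beta> ^ t < 1"
    using assms by (simp add: power_less_one_iff)
  then show ?thesis
    using assms(2) unfolding ptau_def qw_def by auto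
qed

lemma sum_ptau_qw_lag_le:
  fixes \<beta> :: real
  assumes "0 \<le> \<beta>" "\<beta> < 1" "\<And>k. 0 \<le> d k"
  shows "(\<Sum>t=1..T. ptau \<beta> T t * (\<Sum>s=1..t. qw \<beta> t s * (real (t - s) * (\<Sum>k=Suc s..t. d k))))
         \<le> (\<beta> + \<beta>\<^sup>2) / ((1 - \<beta>)\<^sup>2 * real T) * (\<Sum>k=1..T. d k)"
proof -
  define P where "P = (1 - \<beta>) * (\<Sum>t=1..<T. lag_cost \<beta> d t) + lag_cost \<beta> d T"
  have "0 \<le> (1 - \<beta>) * lag_tail \<beta> d T"
    using lag_tail_nonneg[of d \<beta> T] assms by simp
  then have potential: "(1 - \<beta>)\<^sup>2 * P \<le> (\<beta> + \<beta>\<^sup>2) * (\<Sum>k=1..T. d k)"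
    using lag_cost_potential_le[of \<beta> d T] assms unfolding P_def by fastforce
  have "(\<Sum>t=1..T. ptau \<beta> T t * (\<Sum>s=1..t. qw \<beta> t s * (real (t - s) * (\<Sum>k=Suc s..t. d k))))
      = (\<Sum>t=1..T. (if t = T then 1 else 1 - \<beta>) / real T * lag_cost \<beta> d t)"
    using assms(1,2) by (auto simp: lag_cost_def sum_distrib_left ptau_mult_qw mult.assoc
        simp flip: mult.assoc[of "ptau \<beta> T _"] intro!: sum.cong)
  also have "\<dots> = P / real T"
    unfolding P_def
    by (cases T) (simp_all add: sum_distrib_left distrib_left add_divide_distrib
        atLeastLessThanSuc_atLeastAtMost[symmetric] sum_divide_distrib[symmetric])
  also have "\<dots> = (1 - \<beta>)\<^sup>2 * P / ((1 - \<beta>)\<^sup>2 * real T)"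
    using assms(2) by simp
  also have "\<dots> \<le> (\<beta> + \<beta>\<^sup>2) * (\<Sum>k=1..T. d k) / ((1 - \<beta>)\<^sup>2 * real T)"
    using potential by (rule divide_right_mono) simp
  finally show ?thesis
    by simp
qed

lemma sum_qw_sq_dist_xbar_le:
  fixes x :: "nat \<Rightarrow> 'a::real_inner"
  assumes "0 \<le> \<beta>" "\<beta> < 1" "1 \<le> t"
  shows "(\<Sum>s=1..t. qw \<beta> t s * (norm (x s - xbar \<beta> x t))\<^sup>2)
         \<le> (\<Sum>s=1..t. qw \<beta> t s * (real (t - s) * (\<Sum>k=Suc s..t. (norm (x k - x (k - 1)))\<^sup>2)))"
proof -
  have "(\<Sum>s=1..t. qw \<beta> t s * (norm (x s - xbar \<beta> x t))\<^sup>2) \<le> (\<Sum>s=1..t. qw \<beta> t s * (norm (x s - x t))\<^sup>2)"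
    unfolding xbar_def
    using sum_qw_eq_1[OF assms] qw_nonneg[OF assms(1,2)] by (rule sum_weighted_sq_dist_mean_le)
  also have "\<dots> \<le> (\<Sum>s=1..t. qw \<beta> t s * (real (t - s) * (\<Sum>k=Suc s..t. (norm (x k - x (k - 1)))\<^sup>2)))"
    using qw_nonneg[OF assms(1,2)] sq_norm_diff_le_sum_sq_increments[of _ t x]
    by (intro sum_mono mult_left_mono) auto
  finally show ?thesis .
qed

theorem lemma7:
  fixes \<beta> :: real and T :: nat and x :: "nat \<Rightarrow> 'a::euclidean_space"
  assumes "0 < \<beta>" "\<beta> < 1" "T \<ge> 1"
  shows "(\<Sum>t=1..T. ptau \<beta> T t * (\<Sum>s=1..t. qw \<beta> t s * (norm (x s - xbar \<beta> x t))\<^sup>2))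
         \<le> 2 * \<beta> / ((1 - \<beta>)\<^sup>2 * real T) * (\<Sum>n=1..T. (norm (x n - x (n - 1)))\<^sup>2)"
proof -
  define d where "d k = (norm (x k - x (k - 1)))\<^sup>2" for k
  have "(\<Sum>t=1..T. ptau \<beta> T t * (\<Sum>s=1..t. qw \<beta> t s * (norm (x s - xbar \<beta> x t))\<^sup>2))
      \<le> (\<Sum>t=1..T. ptau \<beta> T t * (\<Sum>s=1..t. qw \<beta> t s * (real (t - s) * (\<Sum>k=Suc s..t. d k))))"
    unfolding d_def using assms
    by (intro sum_mono mult_left_mono ptau_nonneg sum_qw_sq_dist_xbar_le) auto
  also have "\<dots> \<le> (\<beta> + \<beta>\<^sup>2) / ((1 - \<beta>)\<^sup>2 * real T) * (\<Sum>k=1..T. d k)"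
    using assms by (intro sum_ptau_qw_lag_le) (auto simp: d_def)
  also have "\<dots> \<le> 2 * \<beta> / ((1 - \<beta>)\<^sup>2 * real T) * (\<Sum>k=1..T. d k)"
    using assms by (intro mult_right_mono divide_right_mono sum_nonneg)
      (auto simp: d_def power2_eq_square mult_left_le_one_le)
  finally show ?thesis
    unfolding d_def .
qed

end
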